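(* Let $(X,\tau)$ be a fuzzifying topological space such that $\tau_P(A\cap B)\ge\min(\tau_P(A),\tau_P(B))$ for all $A,B\subseteq X$. Then $$\vDash T_2^P(X,\tau)\otimes(L_PC(X,\tau))^2\to\forall x\forall U\big(U\in N^{P}_x\to\exists V(V\in N^{P}_x\wedge Cl_P(V)\subseteq U\wedge\Gamma_P(V))\big),$$ that is, for all $x\in X$ and $U\subseteq X$, $$\max\big(0,T_2^P(X,\tau)+2L_PC(X,\tau)-2\big)\le\min\Big(1,\ 1-N^P_x(U)+\sup_{V\subseteq X}\min\big(N^P_x(V),\ \inf_{y\in X\setminus U}N^P_y(X\setminus V),\ \Gamma_P(V)\big)\Big).$$
   Context: Łukasiewicz semantics: $[\varphi\otimes\psi]=\max(0,[\varphi]+[\psi]-1)$, $[\varphi\to\psi]=\min(1,1-[\varphi]+[\psi])$, $[\wedge]=\min$, $[\forall]=\inf$, $[\exists]=\sup$, $\vDash$ means value $1$; $(L_PC)^2=L_PC\otimes L_PC$; $[Cl_P(V)\subseteq U]=\inf_{y\notin U}(1-Cl_P(V)(y))$. A fuzzifying topology on $X$ is $\tau:P(X)\to[0,1]$ with $\tau(X)=1$, $\tau(A\cap B)\ge\min(\tau(A),\tau(B))$, $\tau(\bigcup A_\lambda)\ge\inf\tau(A_\lambda)$. $N_x(A)=\sup_{x\in B\subseteq A}\tau(B)$; $Cl(A)(x)=1-N_x(X\setminus A)$; for $\mu:X\to[0,1]$, $Int(\mu)(x)=\sup_{x\in B}\min(\tau(B),\inf_{y\in B}\mu(y))$. Pre-open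 degrees $\tau_P(A)=\inf_{x\in A}Int(Cl(A))(x)$; $N^P_x(A)=\sup_{x\in B\subseteq A}\tau_P(B)$; $Cl_P(A)(x)=1-N^P_x(X\setminus A)$. $T_2^P(X,\tau)=\inf_{x\ne y}\sup\{\min(N^P_x(B),N^P_y(C)):B\cap C=\emptyset\}$. For $G\subseteq X$: $(\tau_P/G)(B)=\sup\{\tau_P(V):V\cap G=B\}$; compactness degree of $G$ w.r.t. $\rho:P(G)\to[0,1]$: with $K(\Re,G)=\inf_{x\in G}\sup_{B\ni x}\Re(B)$, $[\Re\subseteq\rho]=\inf_B\min(1,1-\Re(B)+\rho(B))$, $\wp\le\Re$ pointwise, $FF(\wp)=1-\inf\{\delta\in[0,1]:\{B:\wp(B)>\delta\}\text{ finite}\}$, $\Gamma(G,\rho)=\inf_{\Re}\min\big(1,1-\max(0,K(\Re,G)+[\Re\subseteq\rho]-1)+\sup_{\wp\le\Re}\max(0,K(\wp,G)+FF(\wp)-1)\big)$; $\Gamma_P(G)=\Gamma(G,\tau_P/G)$. $L_PC(X,\tau)=\inf_{x\in X}\sup_{B\subseteq X}\max(0,N^P_x(B)+\Gamma_P(B)-1)$. *)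

theory Defs
  imports Complex_Main
begin

text \<open>The space X is the universe of the type 'a. Infima/suprema are taken in [0,1]:
  the infimum of the empty set is 1, the supremum of the empty set is 0.\<close>

definition infI :: "real set \<Rightarrow> real" where
  "infI S = (if S = {} then 1 else Inf S)"

definition supI :: "real set \<Rightarrow> real" where
  "supI S = (if S = {} then 0 else Sup S)"

definition fuzzifying_topology :: "('a set \<Rightarrow> real) \<Rightarrow> bool" where
  "fuzzifying_topology \<tau> \<longleftrightarrow>
     (\<forall>A. 0 \<le> \<tau> A \<and> \<tau> A \<le> 1) \<and>
     \<tau> UNIV = 1 \<and>
     (\<forall>A B. \<tau> (A \<inter> B) \<ge> min (\<tau> A) (\<tau> B)) \<and>
     (\<forall>\<A>. \<tau> (\<Union>\<A>) \<ge> infI (\<tau> ` \<A>))"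

definition nbhd :: "('a set \<Rightarrow> real) \<Rightarrow> 'a \<Rightarrow> 'a set \<Rightarrow> real" where
  "nbhd \<tau> x A = supI {\<tau> B | B. x \<in> B \<and> B \<subseteq> A}"

definition clos :: "('a set \<Rightarrow> real) \<Rightarrow> 'a set \<Rightarrow> 'a \<Rightarrow> real" where
  "clos \<tau> A x = 1 - nbhd \<tau> x (- A)"

definition interior_fz :: "('a set \<Rightarrow> real) \<Rightarrow> ('a \<Rightarrow> real) \<Rightarrow> 'a \<Rightarrow> real" where
  "interior_fz \<tau> \<mu> x = supI {min (\<tau> B) (infI (\<mu> ` B)) | B. x \<in> B}"

definition preopen :: "('a set \<Rightarrow> real) \<Rightarrow> 'a set \<Rightarrow> real" where
  "preopen \<tau> A = infI ((\<lambda>x. interior_fz \<tau> (clos \<tau> A) x) ` A)"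

definition pnbhd :: "('a set \<Rightarrow> real) \<Rightarrow> 'a \<Rightarrow> 'a set \<Rightarrow> real" where
  "pnbhd \<tau> x A = supI {preopen \<tau> B | B. x \<in> B \<and> B \<subseteq> A}"

definition pclos :: "('a set \<Rightarrow> real) \<Rightarrow> 'a set \<Rightarrow> 'a \<Rightarrow> real" where
  "pclos \<tau> A x = 1 - pnbhd \<tau> x (- A)"

definition T2P :: "('a set \<Rightarrow> real) \<Rightarrow> real" where
  "T2P \<tau> = infI {supI {min (pnbhd \<tau> x B) (pnbhd \<tau> y C) | B C. B \<inter> C = {}} | x y. x \<noteq> y}"

definition preopen_rel :: "('a set \<Rightarrow> real) \<Rightarrow> 'a set \<Rightarrow> 'a set \<Rightarrow> real" where
  "preopen_rel \<tau> G B = supI {preopen \<tau> V | V. V \<inter> G = B}"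

text \<open>Fuzzy families of subsets of G: maps P(G) \<rightarrow> [0,1] (values outside P(G) are ignored).\<close>
definition fuzzy_family :: "'a set \<Rightarrow> ('a set \<Rightarrow> real) \<Rightarrow> bool" where
  "fuzzy_family G \<R> \<longleftrightarrow> (\<forall>B. B \<subseteq> G \<longrightarrow> 0 \<le> \<R> B \<and> \<R> B \<le> 1)"

definition Kcov :: "('a set \<Rightarrow> real) \<Rightarrow> 'a set \<Rightarrow> real" where
  "Kcov \<R> G = infI ((\<lambda>x. supI {\<R> B | B. B \<subseteq> G \<and> x \<in> B}) ` G)"

definition incl_deg :: "'a set \<Rightarrow> ('a set \<Rightarrow> real) \<Rightarrow> ('a set \<Rightarrow> real) \<Rightarrow> real" where
  "incl_deg G \<R> \<rho> = infI {min 1 (1 - \<R> B + \<rho> B) | B. B \<subseteq> G}"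

definition FF :: "'a set \<Rightarrow> ('a set \<Rightarrow> real) \<Rightarrow> real" where
  "FF G \<P> = 1 - infI {\<delta>. 0 \<le> \<delta> \<and> \<delta> \<le> 1 \<and> finite {B. B \<subseteq> G \<and> \<P> B > \<delta>}}"

definition compact_deg :: "'a set \<Rightarrow> ('a set \<Rightarrow> real) \<Rightarrow> real" where
  "compact_deg G \<rho> = infI {min 1 (1 - max 0 (Kcov \<R> G + incl_deg G \<R> \<rho> - 1)
        + supI {max 0 (Kcov \<P> G + FF G \<P> - 1) | \<P>.
                 fuzzy_family G \<P> \<and> (\<forall>B. B \<subseteq> G \<longrightarrow> \<P> B \<le> \<R> B)})
     | \<R>. fuzzy_family G \<R>}"

definition GammaP :: "('a set \<Rightarrow> real) \<Rightarrow> 'a set \<Rightarrow> real" where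
  "GammaP \<tau> G = compact_deg G (preopen_rel \<tau> G)"

definition LPC :: "('a set \<Rightarrow> real) \<Rightarrow> real" where
  "LPC \<tau> = infI (range (\<lambda>x. supI {max 0 (pnbhd \<tau> x B + GammaP \<tau> B - 1) | B. True}))"

end

theory Submission
  imports Defs
begin

text \<open>
  Local compactness gives a set \<open>B\<close> that is a pre-neighbourhood of \<open>x\<close> and
  compact to a high degree, and inside \<open>B \<inter> U\<close> a pre-open \<open>W \<ni> x\<close>. Since \<open>B - W\<close> is pre-closed
  in \<open>B\<close>, it inherits compactness from \<open>B\<close>; combined with \<open>T\<^sub>2\<close>, a finite subcover turns the pointwise
  separations of \<open>x\<close> from the points of \<open>B - W\<close> into disjoint pre-open sets \<open>P \<ni> x\<close> and
  \<open>Q \<supseteq> B - W\<close> (finite intersections are where stability of pre-open degrees under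
  \<open>\<inter>\<close> is used). Then \<open>V = B - Q\<close> is a pre-neighbourhood of \<open>x\<close> (it contains \<open>P \<inter> W\<close>), again
  pre-closed in \<open>B\<close> and hence compact, and each \<open>y \<notin> U\<close> has a pre-neighbourhood missing \<open>V\<close>:
  \<open>Q\<close> if \<open>y \<in> B\<close>, and otherwise one obtained by separating \<open>y\<close> from the compact set \<open>B\<close>.
\<close>

lemma supI_upper:
  assumes "x \<in> S" "\<And>y. y \<in> S \<Longrightarrow> y \<le> 1"
  shows "x \<le> supI S"
proof -
  have "bdd_above S" using assms(2) by (rule bdd_aboveI)
  with assms(1) show ?thesis unfolding supI_def by (auto intro: cSup_upper)
qed

lemma supI_least: "(\<And>x. x \<in> S \<Longrightarrow> x \<le> c) \<Longrightarrow> 0 \<le> c \<Longrightarrow> supI S \<le> c"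
  unfolding supI_def by (auto intro: cSup_least)

lemma less_supID:
  assumes "c < supI S" "0 \<le> c" "\<And>y. y \<in> S \<Longrightarrow> y \<le> 1"
  shows "\<exists>x\<in>S. c < x"
proof -
  have "bdd_above S" using assms(3) by (rule bdd_aboveI)
  with assms(1,2) show ?thesis unfolding supI_def by (auto split: if_splits simp: less_cSup_iff)
qed

lemma supI_unit: "(\<And>x. x \<in> S \<Longrightarrow> 0 \<le> x \<and> x \<le> 1) \<Longrightarrow> 0 \<le> supI S \<and> supI S \<le> 1"
proof (cases "S = {}")
  case False
  then obtain x where "x \<in> S" by blast
  moreover assume "\<And>x. x \<in> S \<Longrightarrow> 0 \<le> x \<and> x \<le> 1"
  ultimately show ?thesis using supI_upper[of x S] supI_least[of S 1] by force
qed (simp add: supI_def)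

lemma infI_lower:
  assumes "x \<in> S" "\<And>y. y \<in> S \<Longrightarrow> 0 \<le> y"
  shows "infI S \<le> x"
proof -
  have "bdd_below S" using assms(2) by (rule bdd_belowI)
  with assms(1) show ?thesis unfolding infI_def by (auto intro: cInf_lower)
qed

lemma infI_greatest: "(\<And>x. x \<in> S \<Longrightarrow> c \<le> x) \<Longrightarrow> c \<le> 1 \<Longrightarrow> c \<le> infI S"
  unfolding infI_def by (auto intro: cInf_greatest)

lemma infI_lessD:
  assumes "infI S < c" "c \<le> 1" "\<And>y. y \<in> S \<Longrightarrow> 0 \<le> y"
  shows "\<exists>x\<in>S. x < c"
proof -
  have "bdd_below S" using assms(3) by (rule bdd_belowI)
  with assms(1,2) show ?thesis unfolding infI_def by (auto split: if_splits simp: cInf_less_iff)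
qed

lemma infI_unit: "(\<And>x. x \<in> S \<Longrightarrow> 0 \<le> x \<and> x \<le> 1) \<Longrightarrow> 0 \<le> infI S \<and> infI S \<le> 1"
proof (cases "S = {}")
  case False
  then obtain x where "x \<in> S" by blast
  moreover assume "\<And>x. x \<in> S \<Longrightarrow> 0 \<le> x \<and> x \<le> 1"
  ultimately show ?thesis using infI_lower[of x S] infI_greatest[of S 0] by force
qed (simp add: infI_def)

lemma infI_image_mono:
  assumes "\<And>y. y \<in> B \<Longrightarrow> \<mu> y \<le> \<mu>' y" "\<And>y. y \<in> B \<Longrightarrow> (0::real) \<le> \<mu> y"
  shows "infI (\<mu> ` B) \<le> infI (\<mu>' ` B)"
  unfolding infI_def using assms by (auto intro!: cInf_mono bdd_belowI)

section \<open>Degrees of covering, finiteness and compactness\<close>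

lemma fuzzy_familyD: "fuzzy_family G R \<Longrightarrow> B \<subseteq> G \<Longrightarrow> 0 \<le> R B \<and> R B \<le> 1"
  unfolding fuzzy_family_def by blast

lemma point_cover_deg_unit:
  "fuzzy_family G R \<Longrightarrow> 0 \<le> supI {R B |B. B \<subseteq> G \<and> w \<in> B} \<and> supI {R B |B. B \<subseteq> G \<and> w \<in> B} \<le> 1"
  unfolding fuzzy_family_def by (rule supI_unit) auto

lemma Kcov_unit: "fuzzy_family G R \<Longrightarrow> 0 \<le> Kcov R G \<and> Kcov R G \<le> 1"
  unfolding Kcov_def by (rule infI_unit) (auto dest: point_cover_deg_unit)

lemma less_KcovD:
  assumes R: "fuzzy_family G R" and "w \<in> G" "0 \<le> c" "c < Kcov R G"
  shows "\<exists>B\<subseteq>G. w \<in> B \<and> c < R B"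
proof -
  let ?S = "{R B |B. B \<subseteq> G \<and> w \<in> B}"
  have "Kcov R G \<le> supI ?S"
    unfolding Kcov_def by (rule infI_lower) (use assms(2) point_cover_deg_unit[OF R] in auto)
  then have "\<exists>u\<in>?S. c < u"
    by (intro less_supID) (use assms(3,4) R in \<open>auto simp: fuzzy_family_def\<close>)
  then show ?thesis by blast
qed

lemma Kcov_greatest:
  assumes R: "fuzzy_family G R" and "c \<le> 1" and cover: "\<And>w. w \<in> G \<Longrightarrow> \<exists>B\<subseteq>G. w \<in> B \<and> c \<le> R B"
  shows "c \<le> Kcov R G"
  unfolding Kcov_def
proof (rule infI_greatest)
  fix u assume "u \<in> (\<lambda>x. supI {R B |B. B \<subseteq> G \<and> x \<in> B}) ` G"
  then obtain w where w: "w \<in> G" "u = supI {R B |B. B \<subseteq> G \<and> w \<in> B}" by blast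
  obtain B where B: "B \<subseteq> G" "w \<in> B" "c \<le> R B" using cover[OF w(1)] by blast
  have "R B \<le> u"
    unfolding w(2) by (rule supI_upper) (use B R in \<open>auto simp: fuzzy_family_def\<close>)
  then show "c \<le> u" using B(3) by linarith
qed fact

lemma Kcov_le_restrict:
  assumes "V \<subseteq> K" and P': "fuzzy_family K P'" and P: "fuzzy_family V P"
    and le: "\<And>E. E \<subseteq> K \<Longrightarrow> E \<inter> V \<noteq> {} \<Longrightarrow> P' E \<le> P (E \<inter> V)"
  shows "Kcov P' K \<le> Kcov P V"
proof (rule dense_le)
  fix c assume c: "c < Kcov P' K"
  show "c \<le> Kcov P V"
  proof (cases "c < 0")
    case True
    then show ?thesis using Kcov_unit[OF P] by linarith
  next
    case False
    show ?thesis
    proof (rule Kcov_greatest[OF P])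
      show "c \<le> 1" using c Kcov_unit[OF P'] by linarith
      fix w assume "w \<in> V"
      then obtain E where "E \<subseteq> K" "w \<in> E" "c < P' E"
        using less_KcovD[OF P', of w c] c False assms(1) by auto
      moreover from this have "E \<inter> V \<noteq> {}" using \<open>w \<in> V\<close> by blast
      ultimately show "\<exists>B\<subseteq>V. w \<in> B \<and> c \<le> P B"
        using le[of E] \<open>w \<in> V\<close> by (intro exI[of _ "E \<inter> V"]) auto
    qed
  qed
qed

lemma Kcov_extension_ge:
  assumes VK: "V \<subseteq> K" and R: "fuzzy_family V R" and R': "fuzzy_family K R'"
    and "c \<le> 1" "0 \<le> a" "0 < e"
    and lift: "\<And>D. D \<subseteq> V \<Longrightarrow> \<exists>E\<subseteq>K. E \<inter> V = D \<and> R D - a \<le> R' E"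
    and outside: "\<And>w. w \<in> K - V \<Longrightarrow> \<exists>E\<subseteq>K. w \<in> E \<and> c \<le> R' E"
  shows "min c (Kcov R V - a - e) \<le> Kcov R' K"
proof (rule Kcov_greatest[OF R'])
  show "min c (Kcov R V - a - e) \<le> 1" using \<open>c \<le> 1\<close> by simp
  fix w assume "w \<in> K"
  show "\<exists>E\<subseteq>K. w \<in> E \<and> min c (Kcov R V - a - e) \<le> R' E"
  proof (cases "w \<in> V")
    case False
    then show ?thesis using outside[of w] \<open>w \<in> K\<close> by (auto intro: min.coboundedI1)
  next
    case True
    show ?thesis
    proof (cases "Kcov R V - e < 0")
      case True
      then have "Kcov R V - a - e \<le> R' K" using fuzzy_familyD[OF R', of K] \<open>0 \<le> a\<close> by simp
      then show ?thesis using \<open>w \<in> K\<close> by (intro exI[of _ K]) (auto intro: min.coboundedI2)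
    next
      case False
      then obtain D where "D \<subseteq> V" "w \<in> D" "Kcov R V - e < R D"
        using less_KcovD[OF R \<open>w \<in> V\<close>, of "Kcov R V - e"] \<open>0 < e\<close> by auto
      moreover from this obtain E where "E \<subseteq> K" "E \<inter> V = D" "R D - a \<le> R' E" using lift by blast
      ultimately show ?thesis by (intro exI[of _ E]) (auto intro: min.coboundedI2)
    qed
  qed
qed

lemma FF_unit: "0 \<le> FF G P \<and> FF G P \<le> 1"
proof -
  have "0 \<le> infI {\<delta>. 0 \<le> \<delta> \<and> \<delta> \<le> 1 \<and> finite {B. B \<subseteq> G \<and> P B > \<delta>}} \<and>
      infI {\<delta>. 0 \<le> \<delta> \<and> \<delta> \<le> 1 \<and> finite {B. B \<subseteq> G \<and> P B > \<delta>}} \<le> 1"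
    by (rule infI_unit) simp
  then show ?thesis unfolding FF_def by linarith
qed

lemma FF_finite_level:
  assumes "1 - c < FF G P" "c \<le> 1"
  shows "\<exists>\<delta>. 0 \<le> \<delta> \<and> \<delta> < c \<and> finite {B. B \<subseteq> G \<and> \<delta> < P B}"
proof -
  let ?\<Delta> = "{\<delta>. 0 \<le> \<delta> \<and> \<delta> \<le> 1 \<and> finite {B. B \<subseteq> G \<and> P B > \<delta>}}"
  have "infI ?\<Delta> < c" using assms(1) unfolding FF_def by linarith
  then have "\<exists>\<delta>\<in>?\<Delta>. \<delta> < c" by (rule infI_lessD) (use assms(2) in simp_all)
  then show ?thesis by blast
qed

lemma FF_le_restrict:
  assumes P': "fuzzy_family K P'" and lift: "\<And>D. D \<subseteq> V \<Longrightarrow> \<exists>E\<subseteq>K. E \<inter> V = D \<and> P D \<le> P' E"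
  shows "FF K P' \<le> FF V P"
proof -
  define \<Delta>K where "\<Delta>K = {\<delta>. 0 \<le> \<delta> \<and> \<delta> \<le> 1 \<and> finite {B. B \<subseteq> K \<and> P' B > \<delta>}}"
  define \<Delta>V where "\<Delta>V = {\<delta>. 0 \<le> \<delta> \<and> \<delta> \<le> 1 \<and> finite {B. B \<subseteq> V \<and> P B > \<delta>}}"
  have level: "{B. B \<subseteq> V \<and> \<delta> < P B} \<subseteq> (\<lambda>E. E \<inter> V) ` {B. B \<subseteq> K \<and> \<delta> < P' B}" for \<delta>
  proof
    fix D assume "D \<in> {B. B \<subseteq> V \<and> \<delta> < P B}"
    then have D: "D \<subseteq> V" "\<delta> < P D" by simp_all
    obtain E where "E \<subseteq> K" "E \<inter> V = D" "P D \<le> P' E" using lift[OF D(1)] by blast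
    then show "D \<in> (\<lambda>E. E \<inter> V) ` {B. B \<subseteq> K \<and> \<delta> < P' B}"
      using D(2) by (intro image_eqI[of _ _ E]) auto
  qed
  have sub: "\<Delta>K \<subseteq> \<Delta>V"
  proof
    fix \<delta> assume \<delta>: "\<delta> \<in> \<Delta>K"
    then have "finite ((\<lambda>E. E \<inter> V) ` {B. B \<subseteq> K \<and> \<delta> < P' B})" unfolding \<Delta>K_def by simp
    then have "finite {B. B \<subseteq> V \<and> \<delta> < P B}" using level by (rule finite_subset[rotated])
    then show "\<delta> \<in> \<Delta>V" using \<delta> unfolding \<Delta>K_def \<Delta>V_def by simp
  qed
  have "{B. B \<subseteq> K \<and> P' B > 1} = {}" using P' unfolding fuzzy_family_def by (simp add: not_less)
  then have "1 \<in> \<Delta>K" unfolding \<Delta>K_def by (simp only: mem_Collect_eq finite.emptyI) simp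
  moreover have "bdd_below \<Delta>V" by (rule bdd_belowI[of _ 0]) (simp add: \<Delta>V_def)
  ultimately have "Inf \<Delta>V \<le> Inf \<Delta>K" using sub by (intro cInf_superset_mono) auto
  then have "infI \<Delta>V \<le> infI \<Delta>K" using \<open>1 \<in> \<Delta>K\<close> sub unfolding infI_def by auto
  then show ?thesis unfolding FF_def \<Delta>K_def \<Delta>V_def by simp
qed

lemma incl_deg_term_unit:
  assumes "fuzzy_family G R" "fuzzy_family G \<rho>" "B \<subseteq> G"
  shows "0 \<le> min 1 (1 - R B + \<rho> B) \<and> min 1 (1 - R B + \<rho> B) \<le> 1"
  using fuzzy_familyD[OF assms(1,3)] fuzzy_familyD[OF assms(2,3)] by simp

lemma incl_deg_unit:
  assumes "fuzzy_family G R" "fuzzy_family G \<rho>"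
  shows "0 \<le> incl_deg G R \<rho> \<and> incl_deg G R \<rho> \<le> 1"
  unfolding incl_deg_def by (rule infI_unit) (use incl_deg_term_unit[OF assms] in blast)

lemma incl_deg_le:
  assumes "fuzzy_family G R" "fuzzy_family G \<rho>" "D \<subseteq> G"
  shows "incl_deg G R \<rho> \<le> 1 - R D + \<rho> D"
proof -
  have "incl_deg G R \<rho> \<le> min 1 (1 - R D + \<rho> D)"
    unfolding incl_deg_def
    by (rule infI_lower) (use assms(3) incl_deg_term_unit[OF assms(1,2)] in blast)+
  then show ?thesis by simp
qed

lemma incl_deg_greatest:
  "c \<le> 1 \<Longrightarrow> (\<And>B. B \<subseteq> G \<Longrightarrow> c \<le> 1 - R B + \<rho> B) \<Longrightarrow> c \<le> incl_deg G R \<rho>"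
  unfolding incl_deg_def by (rule infI_greatest) auto

definition finite_subcover_deg :: "'a set \<Rightarrow> ('a set \<Rightarrow> real) \<Rightarrow> real" where
  "finite_subcover_deg G R = supI {max 0 (Kcov P G + FF G P - 1) | P.
     fuzzy_family G P \<and> (\<forall>B. B \<subseteq> G \<longrightarrow> P B \<le> R B)}"

lemma cover_excess_unit:
  "fuzzy_family G P \<Longrightarrow> 0 \<le> max 0 (Kcov P G + FF G P - 1) \<and> max 0 (Kcov P G + FF G P - 1) \<le> 1"
  using Kcov_unit[of G P] FF_unit[of G P] by linarith

lemma finite_subcover_deg_unit: "0 \<le> finite_subcover_deg G R \<and> finite_subcover_deg G R \<le> 1"
  unfolding finite_subcover_deg_def by (rule supI_unit) (blast dest: cover_excess_unit)

lemma finite_subcover_deg_ge: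
  assumes "fuzzy_family G P" "\<And>B. B \<subseteq> G \<Longrightarrow> P B \<le> R B"
  shows "Kcov P G + FF G P - 1 \<le> finite_subcover_deg G R"
proof -
  have "max 0 (Kcov P G + FF G P - 1) \<le> finite_subcover_deg G R"
    unfolding finite_subcover_deg_def
    by (rule supI_upper) (use assms in \<open>blast, blast dest: cover_excess_unit\<close>)
  then show ?thesis by simp
qed

lemma finite_subcover_deg_posD:
  assumes "0 < finite_subcover_deg G R"
  shows "\<exists>P. fuzzy_family G P \<and> (\<forall>B. B \<subseteq> G \<longrightarrow> P B \<le> R B) \<and> 1 < Kcov P G + FF G P"
proof -
  let ?S = "{max 0 (Kcov P G + FF G P - 1) | P. fuzzy_family G P \<and> (\<forall>B. B \<subseteq> G \<longrightarrow> P B \<le> R B)}"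
  have "\<exists>u\<in>?S. 0 < u"
    by (rule less_supID) (use assms in \<open>simp add: finite_subcover_deg_def, simp, blast dest: cover_excess_unit\<close>)
  then show ?thesis by (auto simp: max_def split: if_splits)
qed

lemma finite_subcover_deg_restrict:
  assumes "V \<subseteq> K" and R: "fuzzy_family V R"
    and L: "\<And>D. D \<subseteq> V \<Longrightarrow> L D \<subseteq> K \<and> L D \<inter> V = D"
    and R': "\<And>E. E \<subseteq> K \<Longrightarrow> E \<inter> V \<noteq> {} \<Longrightarrow> 0 < R' E \<Longrightarrow> E = L (E \<inter> V) \<and> R' E \<le> R (E \<inter> V)"
  shows "finite_subcover_deg K R' \<le> finite_subcover_deg V R"
  unfolding finite_subcover_deg_def[of K]
proof (rule supI_least)
  fix u assume "u \<in> {max 0 (Kcov P' K + FF K P' - 1) | P'. fuzzy_family K P' \<and> (\<forall>B. B \<subseteq> K \<longrightarrow> P' B \<le> R' B)}"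
  then obtain P' where P': "fuzzy_family K P'" "\<And>B. B \<subseteq> K \<Longrightarrow> P' B \<le> R' B"
    and u: "u = max 0 (Kcov P' K + FF K P' - 1)" by blast
  define P where "P D = min (R D) (P' (L D))" for D
  have "0 \<le> P D \<and> P D \<le> 1" if "D \<subseteq> V" for D
    using fuzzy_familyD[OF R that] fuzzy_familyD[OF P'(1), of "L D"] L[OF that] unfolding P_def by auto
  then have P: "fuzzy_family V P" unfolding fuzzy_family_def by blast
  have "P' E \<le> P (E \<inter> V)" if "E \<subseteq> K" "E \<inter> V \<noteq> {}" for E
  proof (cases "0 < P' E")
    case True
    then have "E = L (E \<inter> V)" "P' E \<le> R (E \<inter> V)" using R'[OF that] P'(2)[OF that(1)] by auto
    then show ?thesis unfolding P_def by simp
  next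
    case False
    then show ?thesis using fuzzy_familyD[OF P, of "E \<inter> V"] by simp
  qed
  then have "Kcov P' K \<le> Kcov P V" by (rule Kcov_le_restrict[OF assms(1) P'(1) P])
  moreover have "FF K P' \<le> FF V P"
  proof (rule FF_le_restrict[OF P'(1)])
    fix D assume "D \<subseteq> V"
    then show "\<exists>E\<subseteq>K. E \<inter> V = D \<and> P D \<le> P' E" using L[of D] by (intro exI[of _ "L D"]) (simp add: P_def)
  qed
  moreover have "Kcov P V + FF V P - 1 \<le> finite_subcover_deg V R"
    by (rule finite_subcover_deg_ge[OF P]) (simp add: P_def)
  ultimately show "u \<le> finite_subcover_deg V R" using finite_subcover_deg_unit[of V R] unfolding u by simp
qed (simp add: finite_subcover_deg_unit)

lemma compact_deg_eq:
  "compact_deg G \<rho> = infI {min 1 (1 - max 0 (Kcov R G + incl_deg G R \<rho> - 1) + finite_subcover_deg G R)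
     | R. fuzzy_family G R}"
  unfolding compact_deg_def finite_subcover_deg_def by simp

lemma compact_deg_term_unit:
  assumes "fuzzy_family G R" "fuzzy_family G \<rho>"
  shows "0 \<le> min 1 (1 - max 0 (Kcov R G + incl_deg G R \<rho> - 1) + finite_subcover_deg G R) \<and>
    min 1 (1 - max 0 (Kcov R G + incl_deg G R \<rho> - 1) + finite_subcover_deg G R) \<le> 1"
  using Kcov_unit[OF assms(1)] incl_deg_unit[OF assms] finite_subcover_deg_unit[of G R] by simp

lemma compact_deg_unit:
  assumes "fuzzy_family G \<rho>"
  shows "0 \<le> compact_deg G \<rho> \<and> compact_deg G \<rho> \<le> 1"
  unfolding compact_deg_eq by (rule infI_unit) (use compact_deg_term_unit assms in blast)

lemma compact_deg_le:
  assumes "fuzzy_family G R" "fuzzy_family G \<rho>"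
  shows "compact_deg G \<rho> \<le> 1 - max 0 (Kcov R G + incl_deg G R \<rho> - 1) + finite_subcover_deg G R"
proof -
  have "compact_deg G \<rho> \<le> min 1 (1 - max 0 (Kcov R G + incl_deg G R \<rho> - 1) + finite_subcover_deg G R)"
    unfolding compact_deg_eq
    by (rule infI_lower) (use assms compact_deg_term_unit[OF _ assms(2)] in blast)+
  then show ?thesis by simp
qed

lemma compact_deg_greatest:
  assumes "c \<le> 1"
    and "\<And>R. fuzzy_family G R \<Longrightarrow>
      c \<le> 1 - max 0 (Kcov R G + incl_deg G R \<rho> - 1) + finite_subcover_deg G R"
  shows "c \<le> compact_deg G \<rho>"
  unfolding compact_deg_eq by (rule infI_greatest) (use assms in auto)

lemma compact_deg_le_included:
  assumes R: "fuzzy_family G R" and \<rho>: "fuzzy_family G \<rho>" and le: "\<And>B. B \<subseteq> G \<Longrightarrow> R B \<le> \<rho> B"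
  shows "compact_deg G \<rho> + Kcov R G - 1 \<le> finite_subcover_deg G R"
proof -
  have "1 \<le> incl_deg G R \<rho>" by (rule incl_deg_greatest) (use le in auto)
  then have "Kcov R G \<le> max 0 (Kcov R G + incl_deg G R \<rho> - 1)" by simp
  then show ?thesis using compact_deg_le[OF R \<rho>] by linarith
qed

lemma compact_deg_finite_subcover:
  assumes R: "fuzzy_family G R" and \<rho>: "fuzzy_family G \<rho>"
    and "1 \<le> Kcov R G" and "1 < incl_deg G R \<rho> + compact_deg G \<rho>"
  shows "\<exists>F. finite F \<and> (\<forall>B\<in>F. B \<subseteq> G \<and> 0 < R B) \<and> G \<subseteq> \<Union>F"
proof -
  have "incl_deg G R \<rho> \<le> max 0 (Kcov R G + incl_deg G R \<rho> - 1)" using assms(3) by simp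
  moreover have "compact_deg G \<rho> \<le> 1 - max 0 (Kcov R G + incl_deg G R \<rho> - 1) + finite_subcover_deg G R"
    by (rule compact_deg_le[OF R \<rho>])
  ultimately have "0 < finite_subcover_deg G R" using assms(4) by linarith
  then obtain P where P: "fuzzy_family G P" "\<And>B. B \<subseteq> G \<Longrightarrow> P B \<le> R B" "1 < Kcov P G + FF G P"
    using finite_subcover_deg_posD by blast
  obtain \<delta> where \<delta>: "0 \<le> \<delta>" "\<delta> < Kcov P G" "finite {B. B \<subseteq> G \<and> \<delta> < P B}"
    using FF_finite_level[of "Kcov P G" G P] P(3) Kcov_unit[OF P(1)] by auto
  have "G \<subseteq> \<Union>{B. B \<subseteq> G \<and> \<delta> < P B}" using less_KcovD[OF P(1) _ \<delta>(1,2)] by blast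
  moreover have "0 < R B" if "B \<subseteq> G" "\<delta> < P B" for B
    using P(2)[OF that(1)] that(2) \<delta>(1) by linarith
  ultimately show ?thesis using \<delta>(3) by (intro exI[of _ "{B. B \<subseteq> G \<and> \<delta> < P B}"]) blast
qed

section \<open>Fuzzifying topological spaces\<close>

locale fuzzifying_space =
  fixes \<tau> :: "'a set \<Rightarrow> real"
  assumes fuzzifying_topology: "fuzzifying_topology \<tau>"
begin

lemma open_deg_unit [simp]: "0 \<le> \<tau> A \<and> \<tau> A \<le> 1"
  using fuzzifying_topology unfolding fuzzifying_topology_def by blast

lemma open_deg_UNIV [simp]: "\<tau> UNIV = 1"
  using fuzzifying_topology unfolding fuzzifying_topology_def by blast

lemma nbhd_unit [simp]: "0 \<le> nbhd \<tau> x A \<and> nbhd \<tau> x A \<le> 1"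
  unfolding nbhd_def by (rule supI_unit) auto

lemma nbhd_mono:
  assumes "A \<subseteq> A'"
  shows "nbhd \<tau> x A \<le> nbhd \<tau> x A'"
proof -
  have "\<tau> B \<le> nbhd \<tau> x A'" if "x \<in> B" "B \<subseteq> A" for B
    unfolding nbhd_def by (rule supI_upper) (use that assms in auto)
  then show ?thesis unfolding nbhd_def[of \<tau> x A] by (intro supI_least) auto
qed

lemma clos_unit [simp]: "0 \<le> clos \<tau> A x \<and> clos \<tau> A x \<le> 1"
  unfolding clos_def using nbhd_unit[of x "- A"] by linarith

lemma clos_mono: "A \<subseteq> A' \<Longrightarrow> clos \<tau> A x \<le> clos \<tau> A' x"
  unfolding clos_def using nbhd_mono[of "- A'" "- A" x] by auto

lemma interior_fz_unit:
  assumes "\<And>y. 0 \<le> \<mu> y"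
  shows "0 \<le> interior_fz \<tau> \<mu> x \<and> interior_fz \<tau> \<mu> x \<le> 1"
proof -
  have "0 \<le> infI (\<mu> ` B)" for B by (rule infI_greatest) (use assms in auto)
  then show ?thesis unfolding interior_fz_def
    by (intro supI_unit) (auto simp: min_le_iff_disj)
qed

lemma interior_clos_unit [simp]: "0 \<le> interior_fz \<tau> (clos \<tau> A) x \<and> interior_fz \<tau> (clos \<tau> A) x \<le> 1"
  by (rule interior_fz_unit) simp

lemma interior_fz_mono:
  assumes "\<And>y. \<mu> y \<le> \<mu>' y" "\<And>y. 0 \<le> \<mu> y"
  shows "interior_fz \<tau> \<mu> x \<le> interior_fz \<tau> \<mu>' x"
  unfolding interior_fz_def[of \<tau> \<mu>]
proof (rule supI_least)
  fix u assume "u \<in> {min (\<tau> B) (infI (\<mu> ` B)) |B. x \<in> B}"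
  then obtain B where B: "x \<in> B" "u = min (\<tau> B) (infI (\<mu> ` B))" by blast
  have "u \<le> min (\<tau> B) (infI (\<mu>' ` B))"
    unfolding B using infI_image_mono[of B \<mu> \<mu>'] assms by fastforce
  also have "\<dots> \<le> interior_fz \<tau> \<mu>' x"
    unfolding interior_fz_def by (rule supI_upper) (use B in \<open>auto simp: min_le_iff_disj\<close>)
  finally show "u \<le> interior_fz \<tau> \<mu>' x" .
next
  show "0 \<le> interior_fz \<tau> \<mu>' x" using interior_fz_unit assms order.trans by blast
qed

lemma preopen_unit [simp]: "0 \<le> preopen \<tau> A \<and> preopen \<tau> A \<le> 1"
  unfolding preopen_def by (rule infI_unit) auto

lemma pnbhd_unit [simp]: "0 \<le> pnbhd \<tau> x A \<and> pnbhd \<tau> x A \<le> 1"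
  unfolding pnbhd_def by (rule supI_unit) auto

lemma preopen_rel_unit [simp]: "0 \<le> preopen_rel \<tau> G A \<and> preopen_rel \<tau> G A \<le> 1"
  unfolding preopen_rel_def by (rule supI_unit) auto

lemma preopen_rel_fuzzy_family: "fuzzy_family G (preopen_rel \<tau> G)"
  unfolding fuzzy_family_def by simp

lemma preopen_le_pnbhd: "x \<in> B \<Longrightarrow> B \<subseteq> A \<Longrightarrow> preopen \<tau> B \<le> pnbhd \<tau> x A"
  unfolding pnbhd_def by (rule supI_upper) auto

lemma less_pnbhdD:
  assumes "c < pnbhd \<tau> x A" "0 \<le> c"
  shows "\<exists>B. x \<in> B \<and> B \<subseteq> A \<and> c < preopen \<tau> B"
proof -
  have "\<exists>u\<in>{preopen \<tau> B |B. x \<in> B \<and> B \<subseteq> A}. c < u"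
    by (rule less_supID) (use assms in \<open>auto simp: pnbhd_def\<close>)
  then show ?thesis by blast
qed

lemma preopen_le_preopen_rel: "preopen \<tau> W \<le> preopen_rel \<tau> G (W \<inter> G)"
  unfolding preopen_rel_def by (rule supI_upper) auto

lemma less_preopen_relD:
  assumes "c < preopen_rel \<tau> G B" "0 \<le> c"
  shows "\<exists>W. W \<inter> G = B \<and> c < preopen \<tau> W"
proof -
  have "\<exists>u\<in>{preopen \<tau> V |V. V \<inter> G = B}. c < u"
    by (rule less_supID) (use assms in \<open>auto simp: preopen_rel_def\<close>)
  then show ?thesis by blast
qed

lemma preopen_UNIV [simp]: "preopen \<tau> UNIV = 1"
proof -
  have "clos \<tau> UNIV y = 1" for y
    unfolding clos_def nbhd_def supI_def by simp
  then have "min (\<tau> UNIV) (infI (clos \<tau> UNIV ` UNIV)) = 1"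
    by (simp add: infI_def)
  moreover have "min (\<tau> UNIV) (infI (clos \<tau> UNIV ` UNIV)) \<le> interior_fz \<tau> (clos \<tau> UNIV) y" for y
    unfolding interior_fz_def
    by (rule supI_upper) (blast, auto simp: min_le_iff_disj)
  ultimately have "1 \<le> interior_fz \<tau> (clos \<tau> UNIV) y" for y by metis
  then have "1 \<le> preopen \<tau> UNIV" unfolding preopen_def by (intro infI_greatest) auto
  then show ?thesis using preopen_unit[of UNIV] by linarith
qed

lemma preopen_Union:
  assumes "\<And>A. A \<in> \<A> \<Longrightarrow> s \<le> preopen \<tau> A" "s \<le> 1"
  shows "s \<le> preopen \<tau> (\<Union>\<A>)"
  unfolding preopen_def
proof (rule infI_greatest)
  fix u assume "u \<in> (\<lambda>x. interior_fz \<tau> (clos \<tau> (\<Union>\<A>)) x) ` \<Union>\<A>"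
  then obtain x A where xA: "A \<in> \<A>" "x \<in> A" "u = interior_fz \<tau> (clos \<tau> (\<Union>\<A>)) x" by auto
  have "s \<le> preopen \<tau> A" using assms xA by auto
  also have "\<dots> \<le> interior_fz \<tau> (clos \<tau> A) x"
    unfolding preopen_def by (rule infI_lower) (use xA in auto)
  also have "\<dots> \<le> u"
    unfolding xA(3) by (rule interior_fz_mono) (use xA(1) in \<open>auto intro!: clos_mono\<close>)
  finally show "s \<le> u" .
qed fact

lemma separation_deg_unit [simp]:
  "0 \<le> supI {min (pnbhd \<tau> x B) (pnbhd \<tau> y C) |B C. B \<inter> C = {}} \<and>
   supI {min (pnbhd \<tau> x B) (pnbhd \<tau> y C) |B C. B \<inter> C = {}} \<le> 1"
  by (rule supI_unit) (auto simp: min_le_iff_disj)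

lemma T2P_unit [simp]: "0 \<le> T2P \<tau> \<and> T2P \<tau> \<le> 1"
  unfolding T2P_def by (rule infI_unit) auto

lemma T2P_separation:
  assumes "0 \<le> s" "s < T2P \<tau>" "z \<noteq> y"
  shows "\<exists>B C. z \<in> B \<and> y \<in> C \<and> B \<inter> C = {} \<and> s < preopen \<tau> B \<and> s < preopen \<tau> C"
proof -
  let ?S = "{min (pnbhd \<tau> z B) (pnbhd \<tau> y C) |B C. B \<inter> C = {}}"
  have "T2P \<tau> \<le> supI ?S"
    unfolding T2P_def
    by (rule infI_lower) (use assms(3) in auto)
  then have "\<exists>u\<in>?S. s < u" by (intro less_supID) (use assms in \<open>auto simp: min_le_iff_disj\<close>)
  then obtain B C where BC: "B \<inter> C = {}" "s < pnbhd \<tau> z B" "s < pnbhd \<tau> y C" by auto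
  obtain B' where "z \<in> B'" "B' \<subseteq> B" "s < preopen \<tau> B'" using less_pnbhdD[OF BC(2) assms(1)] by blast
  moreover obtain C' where "y \<in> C'" "C' \<subseteq> C" "s < preopen \<tau> C'" using less_pnbhdD[OF BC(3) assms(1)] by blast
  ultimately show ?thesis using BC(1) by blast
qed

lemma GammaP_unit [simp]: "0 \<le> GammaP \<tau> G \<and> GammaP \<tau> G \<le> 1"
  unfolding GammaP_def by (rule compact_deg_unit[OF preopen_rel_fuzzy_family])

lemma pnbhd_GammaP_excess_le [simp]: "pnbhd \<tau> x B + GammaP \<tau> B - 1 \<le> 1"
  using pnbhd_unit[of x B] GammaP_unit[of B] by linarith

lemma local_compact_deg_unit [simp]:
  "0 \<le> supI {max 0 (pnbhd \<tau> x B + GammaP \<tau> B - 1) | B. True} \<and>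
   supI {max 0 (pnbhd \<tau> x B + GammaP \<tau> B - 1) | B. True} \<le> 1"
  by (rule supI_unit) auto

lemma LPC_unit [simp]: "0 \<le> LPC \<tau> \<and> LPC \<tau> \<le> 1"
  unfolding LPC_def by (rule infI_unit) (use local_compact_deg_unit in blast)

lemma less_LPCD:
  assumes "0 \<le> c" "c < LPC \<tau>"
  shows "\<exists>B. c < pnbhd \<tau> x B + GammaP \<tau> B - 1"
proof -
  let ?S = "{max 0 (pnbhd \<tau> x B + GammaP \<tau> B - 1) | B. True}"
  have "LPC \<tau> \<le> supI ?S"
    unfolding LPC_def by (rule infI_lower) (blast, use local_compact_deg_unit in blast)
  then have "\<exists>u\<in>?S. c < u" by (intro less_supID) (use assms in auto)
  then show ?thesis using assms(1) by (auto simp: less_max_iff_disj)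
qed

lemma GammaP_finite_subcover:
  assumes "s \<le> 1" "1 < s + GammaP \<tau> C" and D: "\<And>y. y \<in> C \<Longrightarrow> y \<in> D y \<and> s \<le> preopen \<tau> (D y)"
  shows "\<exists>F\<subseteq>C. finite F \<and> C \<subseteq> (\<Union>y\<in>F. D y)"
proof -
  define R where "R E = (if \<exists>y\<in>C. E = D y \<inter> C then 1 else 0 :: real)" for E
  have R: "fuzzy_family C R" unfolding fuzzy_family_def R_def by simp
  have "1 \<le> Kcov R C"
  proof (rule Kcov_greatest[OF R])
    fix w assume "w \<in> C"
    then show "\<exists>B\<subseteq>C. w \<in> B \<and> 1 \<le> R B"
      using D[of w] by (intro exI[of _ "D w \<inter> C"]) (auto simp: R_def)
  qed simp
  moreover have "s \<le> incl_deg C R (preopen_rel \<tau> C)"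
  proof (rule incl_deg_greatest[OF assms(1)])
    fix B assume "B \<subseteq> C"
    show "s \<le> 1 - R B + preopen_rel \<tau> C B"
    proof (cases "\<exists>y\<in>C. B = D y \<inter> C")
      case True
      then obtain y where "y \<in> C" "B = D y \<inter> C" by blast
      then show ?thesis using D[of y] preopen_le_preopen_rel[of "D y" C] by (simp add: R_def)
    qed (simp add: R_def, use assms(1) preopen_rel_unit[of C B] in linarith)
  qed
  ultimately have "1 < incl_deg C R (preopen_rel \<tau> C) + compact_deg C (preopen_rel \<tau> C)"
    using assms(2) unfolding GammaP_def by linarith
  with \<open>1 \<le> Kcov R C\<close> have "\<exists>F. finite F \<and> (\<forall>B\<in>F. B \<subseteq> C \<and> 0 < R B) \<and> C \<subseteq> \<Union>F"
    by (intro compact_deg_finite_subcover[OF R preopen_rel_fuzzy_family])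
  then obtain F' where F': "finite F'" "\<forall>B\<in>F'. B \<subseteq> C \<and> 0 < R B" "C \<subseteq> \<Union>F'" by blast
  have "\<exists>y. y \<in> C \<and> B = D y \<inter> C" if "B \<in> F'" for B
    using F'(2) that by (cases "\<exists>y\<in>C. B = D y \<inter> C") (auto simp: R_def)
  then obtain f where f: "\<And>B. B \<in> F' \<Longrightarrow> f B \<in> C \<and> B = D (f B) \<inter> C" by metis
  show ?thesis
  proof (intro exI conjI)
    show "f ` F' \<subseteq> C" "finite (f ` F')" using f F'(1) by auto
    show "C \<subseteq> (\<Union>y\<in>f ` F'. D y)"
    proof
      fix w assume "w \<in> C"
      then obtain B where "B \<in> F'" "w \<in> B" using F'(3) by blast
      then show "w \<in> (\<Union>y\<in>f ` F'. D y)" using f[of B] by blast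
    qed
  qed
qed

lemma incl_deg_lift:
  assumes R: "fuzzy_family V R" and "0 < e" "D \<subseteq> V"
  shows "\<exists>W. W \<inter> V = D \<and> R D + incl_deg V R (preopen_rel \<tau> V) - 1 - e \<le> preopen \<tau> W"
proof (cases "R D + incl_deg V R (preopen_rel \<tau> V) - 1 - e < 0")
  case True
  show ?thesis
  proof (intro exI conjI)
    show "D \<inter> V = D" using assms(3) by blast
    show "R D + incl_deg V R (preopen_rel \<tau> V) - 1 - e \<le> preopen \<tau> D"
      using True preopen_unit[of D] by linarith
  qed
next
  case False
  have "R D + incl_deg V R (preopen_rel \<tau> V) - 1 - e < preopen_rel \<tau> V D"
    using incl_deg_le[OF R preopen_rel_fuzzy_family assms(3)] \<open>0 < e\<close> by linarith
  moreover have "0 \<le> R D + incl_deg V R (preopen_rel \<tau> V) - 1 - e" using False by linarith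
  ultimately obtain W where "W \<inter> V = D" "R D + incl_deg V R (preopen_rel \<tau> V) - 1 - e < preopen \<tau> W"
    using less_preopen_relD by blast
  then show ?thesis by (intro exI[of _ W]) simp
qed

lemma GammaP_closed_subset_family:
  assumes VK: "V \<subseteq> K" and c: "0 \<le> c" "c \<le> 1"
    and sep: "\<And>y. y \<in> K - V \<Longrightarrow> \<exists>Z. y \<in> Z \<and> Z \<inter> V = {} \<and> c \<le> preopen \<tau> Z"
    and R: "fuzzy_family V R" and e: "0 < e"
  shows "GammaP \<tau> K + min c (Kcov R V + incl_deg V R (preopen_rel \<tau> V) - 1 - 2 * e) - 1
    \<le> finite_subcover_deg V R"
proof -
  define i where "i = incl_deg V R (preopen_rel \<tau> V)"
  have i: "0 \<le> i" "i \<le> 1" using incl_deg_unit[OF R preopen_rel_fuzzy_family] unfolding i_def by auto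
  obtain L where L: "\<And>D. D \<subseteq> V \<Longrightarrow> L D \<inter> V = D \<and> R D + i - 1 - e \<le> preopen \<tau> (L D)"
    using incl_deg_lift[OF R e] unfolding i_def by metis
  obtain Z where Z: "\<And>y. y \<in> K - V \<Longrightarrow> y \<in> Z y \<and> Z y \<inter> V = {} \<and> c \<le> preopen \<tau> (Z y)"
    using sep by metis
  \<comment> \<open>\<open>R'\<close> lifts each \<open>D \<subseteq> V\<close> to \<open>L D \<inter> K\<close> and adds the sets \<open>Z y \<inter> K\<close> covering \<open>K - V\<close>\<close>
  define R' where "R' E = max (if E = L (E \<inter> V) \<inter> K then max 0 (R (E \<inter> V) + i - 1 - e) else 0)
    (if \<exists>y\<in>K - V. E = Z y \<inter> K then c else 0)" for E
  have R'_unit: "0 \<le> R' E \<and> R' E \<le> 1" for E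
    using fuzzy_familyD[OF R, of "E \<inter> V"] i e c unfolding R'_def by auto
  then have R': "fuzzy_family K R'" unfolding fuzzy_family_def by blast
  have "R' E \<le> preopen_rel \<tau> K E" if "E \<subseteq> K" for E
  proof -
    have "max 0 (R (E \<inter> V) + i - 1 - e) \<le> preopen_rel \<tau> K E" if "E = L (E \<inter> V) \<inter> K"
      using L[of "E \<inter> V"] preopen_le_preopen_rel[of "L (E \<inter> V)" K] that by simp
    moreover have "c \<le> preopen_rel \<tau> K E" if "y \<in> K - V" "E = Z y \<inter> K" for y
      using Z[OF that(1)] preopen_le_preopen_rel[of "Z y" K] that(2) by simp
    ultimately show ?thesis unfolding R'_def by auto
  qed
  then have Gamma_K: "GammaP \<tau> K + Kcov R' K - 1 \<le> finite_subcover_deg K R'"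
    unfolding GammaP_def by (rule compact_deg_le_included[OF R' preopen_rel_fuzzy_family])
  have "min c (Kcov R V - (1 + e - i) - e) \<le> Kcov R' K"
  proof (rule Kcov_extension_ge[OF VK R R' c(2)])
    fix D assume "D \<subseteq> V"
    then have "L D \<inter> K \<inter> V = D" using L VK by blast
    then show "\<exists>E\<subseteq>K. E \<inter> V = D \<and> R D - (1 + e - i) \<le> R' E"
      by (intro exI[of _ "L D \<inter> K"]) (simp add: R'_def)
  next
    fix w assume "w \<in> K - V"
    then show "\<exists>E\<subseteq>K. w \<in> E \<and> c \<le> R' E"
      using Z[of w] by (intro exI[of _ "Z w \<inter> K"]) (auto simp: R'_def)
  qed (use i e in auto)
  moreover have "finite_subcover_deg K R' \<le> finite_subcover_deg V R"
  proof (rule finite_subcover_deg_restrict[OF VK R])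
    show "L D \<inter> K \<subseteq> K \<and> L D \<inter> K \<inter> V = D" if "D \<subseteq> V" for D using L[OF that] VK by blast
    fix E assume E: "E \<subseteq> K" "E \<inter> V \<noteq> {}" "0 < R' E"
    have "\<not> (\<exists>y\<in>K - V. E = Z y \<inter> K)" using Z E(2) by blast
    then have "0 < max 0 (R (E \<inter> V) + i - 1 - e)" "E = L (E \<inter> V) \<inter> K"
      using E(3) unfolding R'_def by (auto split: if_splits)
    moreover have "max 0 (R (E \<inter> V) + i - 1 - e) \<le> R (E \<inter> V)"
      using fuzzy_familyD[OF R, of "E \<inter> V"] i e by simp
    ultimately show "E = L (E \<inter> V) \<inter> K \<and> R' E \<le> R (E \<inter> V)"
      using \<open>\<not> (\<exists>y\<in>K - V. E = Z y \<inter> K)\<close> unfolding R'_def by simp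
  qed
  ultimately show ?thesis using Gamma_K unfolding i_def by simp
qed

lemma GammaP_closed_subset:
  assumes "V \<subseteq> K" "0 \<le> c" "c \<le> 1"
    and sep: "\<And>y. y \<in> K - V \<Longrightarrow> \<exists>Z. y \<in> Z \<and> Z \<inter> V = {} \<and> c \<le> preopen \<tau> Z"
  shows "GammaP \<tau> K + c - 1 \<le> GammaP \<tau> V"
  unfolding GammaP_def[of \<tau> V]
proof (rule compact_deg_greatest)
  show "GammaP \<tau> K + c - 1 \<le> 1" using GammaP_unit[of K] assms(3) by linarith
  fix R assume R: "fuzzy_family V R"
  define k where "k = Kcov R V + incl_deg V R (preopen_rel \<tau> V) - 1"
  have "GammaP \<tau> K + c - 1 \<le> 1 - max 0 k + finite_subcover_deg V R + e" if "0 < e" for e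
  proof -
    have "GammaP \<tau> K + min c (k - 2 * (e / 2)) - 1 \<le> finite_subcover_deg V R"
      unfolding k_def using GammaP_closed_subset_family[OF assms R, of "e / 2"] that by simp
    moreover have "k \<le> 1" using Kcov_unit[OF R] incl_deg_unit[OF R preopen_rel_fuzzy_family]
      unfolding k_def by linarith
    moreover have "min c (k - e) = c \<or> min c (k - e) = k - e" by (simp add: min_def)
    moreover have "max 0 k = 0 \<or> max 0 k = k" by (simp add: max_def)
    ultimately show ?thesis
      using GammaP_unit[of K, THEN conjunct2] assms(3) finite_subcover_deg_unit[of V R, THEN conjunct1] that
      by (elim disjE) linarith+
  qed
  then show "GammaP \<tau> K + c - 1 \<le> 1 - max 0 k + finite_subcover_deg V R" by (rule field_le_epsilon)
qed

end

text \<open>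
  The degree of \<open>\<exists>V (V \<in> N\<^sup>P\<^sub>x \<and> Cl\<^sub>P(V) \<subseteq> U \<and> \<Gamma>\<^sub>P(V))\<close>: as \<open>Cl\<^sub>P(V)(y) = 1 - N\<^sup>P\<^sub>y(-V)\<close>,
  the middle term is \<open>[Cl\<^sub>P(V) \<subseteq> U]\<close>.
\<close>
definition compact_pclosed_nbhd_deg :: "('a set \<Rightarrow> real) \<Rightarrow> 'a \<Rightarrow> 'a set \<Rightarrow> real" where
  "compact_pclosed_nbhd_deg \<tau> x U =
     supI {min (pnbhd \<tau> x V) (min (infI ((\<lambda>y. pnbhd \<tau> y (- V)) ` (- U))) (GammaP \<tau> V)) | V. True}"

context fuzzifying_space
begin

lemma compact_pclosed_nbhd_term_unit:
  "0 \<le> min (pnbhd \<tau> x V) (min (infI ((\<lambda>y. pnbhd \<tau> y (- V)) ` (- U))) (GammaP \<tau> V)) \<and>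
   min (pnbhd \<tau> x V) (min (infI ((\<lambda>y. pnbhd \<tau> y (- V)) ` (- U))) (GammaP \<tau> V)) \<le> 1"
proof -
  have "0 \<le> infI ((\<lambda>y. pnbhd \<tau> y (- V)) ` (- U))" by (rule infI_greatest) auto
  then show ?thesis by (simp add: min_le_iff_disj)
qed

lemma compact_pclosed_nbhd_deg_unit:
  "0 \<le> compact_pclosed_nbhd_deg \<tau> x U \<and> compact_pclosed_nbhd_deg \<tau> x U \<le> 1"
  unfolding compact_pclosed_nbhd_deg_def
  by (rule supI_unit) (use compact_pclosed_nbhd_term_unit in blast)

lemma le_compact_pclosed_nbhd_deg:
  "min (pnbhd \<tau> x V) (min (infI ((\<lambda>y. pnbhd \<tau> y (- V)) ` (- U))) (GammaP \<tau> V))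
     \<le> compact_pclosed_nbhd_deg \<tau> x U"
  unfolding compact_pclosed_nbhd_deg_def
  by (rule supI_upper) (blast, use compact_pclosed_nbhd_term_unit in blast)

end

section \<open>Pre-open degrees stable under intersection\<close>

locale preopen_Int_stable = fuzzifying_space +
  assumes preopen_Int: "min (preopen \<tau> A) (preopen \<tau> B) \<le> preopen \<tau> (A \<inter> B)"
begin

lemma preopen_Inter:
  assumes "finite \<F>" "\<And>A. A \<in> \<F> \<Longrightarrow> s \<le> preopen \<tau> A" "s \<le> 1"
  shows "s \<le> preopen \<tau> (\<Inter>\<F>)"
  using assms(1,2)
proof (induction \<F> rule: finite_induct)
  case empty
  then show ?case using assms(3) by simp
next
  case (insert A \<F>)
  then have "s \<le> preopen \<tau> A" "s \<le> preopen \<tau> (\<Inter>\<F>)" by auto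
  then show ?case using preopen_Int[of A "\<Inter>\<F>"] by simp
qed

lemma separate_point_compact:
  assumes "z \<notin> C" "0 \<le> s" "s < T2P \<tau>" "1 < s + GammaP \<tau> C"
  shows "\<exists>P Q. z \<in> P \<and> C \<subseteq> Q \<and> P \<inter> Q = {} \<and> s \<le> preopen \<tau> P \<and> s \<le> preopen \<tau> Q"
proof -
  have s1: "s \<le> 1" using assms(3) T2P_unit by linarith
  have "\<forall>y\<in>C. \<exists>B D. z \<in> B \<and> y \<in> D \<and> B \<inter> D = {} \<and> s < preopen \<tau> B \<and> s < preopen \<tau> D"
    using T2P_separation[OF assms(2,3)] assms(1) by metis
  then obtain B D where BD: "\<And>y. y \<in> C \<Longrightarrow>
      z \<in> B y \<and> y \<in> D y \<and> B y \<inter> D y = {} \<and> s < preopen \<tau> (B y) \<and> s < preopen \<tau> (D y)"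
    by metis
  have "\<exists>F\<subseteq>C. finite F \<and> C \<subseteq> (\<Union>y\<in>F. D y)"
    by (rule GammaP_finite_subcover[OF s1 assms(4)]) (use BD in \<open>auto intro: less_imp_le\<close>)
  then obtain F where F: "F \<subseteq> C" "finite F" "C \<subseteq> (\<Union>y\<in>F. D y)" by blast
  show ?thesis
  proof (intro exI conjI)
    show "z \<in> (\<Inter>y\<in>F. B y)" "(\<Inter>y\<in>F. B y) \<inter> (\<Union>y\<in>F. D y) = {}" using BD F(1) by blast+
    show "C \<subseteq> (\<Union>y\<in>F. D y)" by (fact F(3))
    show "s \<le> preopen \<tau> (\<Inter>y\<in>F. B y)"
      by (rule preopen_Inter) (use F BD s1 in \<open>auto intro: less_imp_le\<close>)
    show "s \<le> preopen \<tau> (\<Union>y\<in>F. D y)"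
      by (rule preopen_Union) (use F BD s1 in \<open>auto intro: less_imp_le\<close>)
  qed
qed

lemma pclos_subset_deg_ge:
  assumes "V \<subseteq> B" "B - U \<subseteq> Q" "Q \<inter> V = {}" "s \<le> preopen \<tau> Q"
    and s: "0 \<le> s" "s < T2P \<tau>" and "1 < s + GammaP \<tau> B"
  shows "s \<le> infI ((\<lambda>y. pnbhd \<tau> y (- V)) ` (- U))"
proof (rule infI_greatest)
  fix u assume "u \<in> (\<lambda>y. pnbhd \<tau> y (- V)) ` (- U)"
  then obtain y where y: "y \<notin> U" "u = pnbhd \<tau> y (- V)" by blast
  obtain Z where Z: "y \<in> Z" "Z \<inter> V = {}" "s \<le> preopen \<tau> Z"
  proof (cases "y \<in> B")
    case True
    then show ?thesis using that[of Q] assms(2-4) y(1) by blast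
  next
    case False
    then obtain P Q' where "y \<in> P" "B \<subseteq> Q'" "P \<inter> Q' = {}" "s \<le> preopen \<tau> P"
      using separate_point_compact[OF False s assms(7)] by blast
    then show ?thesis using that[of P] assms(1) by blast
  qed
  have "preopen \<tau> Z \<le> pnbhd \<tau> y (- V)" by (rule preopen_le_pnbhd) (use Z in auto)
  then show "s \<le> u" using Z(3) y(2) by linarith
qed (use s T2P_unit in linarith)

lemma compact_pclosed_pnbhd:
  assumes W: "x \<in> W" "W \<subseteq> B" "W \<subseteq> U" "c \<le> preopen \<tau> W" "0 \<le> c"
    and s: "0 \<le> s" "s < T2P \<tau>" and large: "2 < s + GammaP \<tau> B + c"
  shows "\<exists>V. min s c \<le> pnbhd \<tau> x V \<and> s \<le> infI ((\<lambda>y. pnbhd \<tau> y (- V)) ` (- U)) \<and>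
    GammaP \<tau> B + s - 1 \<le> GammaP \<tau> V"
proof -
  have c1: "c \<le> 1" using W(4) preopen_unit[of W] by linarith
  have s1: "s \<le> 1" using s(2) T2P_unit by linarith
  have "GammaP \<tau> B + c - 1 \<le> GammaP \<tau> (B - W)"
  proof (rule GammaP_closed_subset[OF _ W(5) c1])
    show "\<exists>Z. y \<in> Z \<and> Z \<inter> (B - W) = {} \<and> c \<le> preopen \<tau> Z" if "y \<in> B - (B - W)" for y
      using that W(4) by (intro exI[of _ W]) auto
  qed blast
  then obtain P Q where PQ: "x \<in> P" "B - W \<subseteq> Q" "P \<inter> Q = {}" "s \<le> preopen \<tau> P" "s \<le> preopen \<tau> Q"
    using separate_point_compact[of x "B - W", OF _ s] W(1) large by fastforce
  define V where "V = B - Q"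
  have "min s c \<le> min (preopen \<tau> P) (preopen \<tau> W)" using PQ(4) W(4) by (rule min.mono)
  also have "\<dots> \<le> preopen \<tau> (P \<inter> W)" by (rule preopen_Int)
  also have "\<dots> \<le> pnbhd \<tau> x V" by (rule preopen_le_pnbhd) (use PQ W in \<open>auto simp: V_def\<close>)
  finally have "min s c \<le> pnbhd \<tau> x V" .
  moreover have "GammaP \<tau> B + s - 1 \<le> GammaP \<tau> V"
  proof (rule GammaP_closed_subset[OF _ s(1) s1])
    show "\<exists>Z. y \<in> Z \<and> Z \<inter> V = {} \<and> s \<le> preopen \<tau> Z" if "y \<in> B - V" for y
      using that PQ(5) by (intro exI[of _ Q]) (auto simp: V_def)
  qed (simp add: V_def)
  moreover have "s \<le> infI ((\<lambda>y. pnbhd \<tau> y (- V)) ` (- U))"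
    by (rule pclos_subset_deg_ge[OF _ _ _ PQ(5) s]) (use W(3) PQ(2) large c1 in \<open>auto simp: V_def\<close>)
  ultimately show ?thesis by blast
qed

lemma compact_pclosed_pnbhd_approx:
  assumes e: "0 < e" and a: "3 * e < T2P \<tau> + 2 * LPC \<tau> + pnbhd \<tau> x U - 3"
  shows "\<exists>V. T2P \<tau> + 2 * LPC \<tau> + pnbhd \<tau> x U - 3 - 2 * e \<le>
    min (pnbhd \<tau> x V) (min (infI ((\<lambda>y. pnbhd \<tau> y (- V)) ` (- U))) (GammaP \<tau> V))"
proof -
  define t l n where "t = T2P \<tau>" and "l = LPC \<tau>" and "n = pnbhd \<tau> x U"
  have tln: "t \<le> 1" "l \<le> 1" "n \<le> 1" unfolding t_def l_def n_def using pnbhd_unit[of x U] by simp_all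
  have a': "3 * e < t + 2 * l + n - 3" using a unfolding t_def l_def n_def .
  obtain B where B: "l - e < pnbhd \<tau> x B + GammaP \<tau> B - 1"
    using less_LPCD[of "l - e" x] a' tln e unfolding l_def by auto
  then have lB: "l - e < pnbhd \<tau> x B" "l - e < GammaP \<tau> B - (1 - pnbhd \<tau> x B)"
    using pnbhd_unit[of x B] GammaP_unit[of B] by linarith+
  obtain W where W: "x \<in> W" "W \<subseteq> B" "l - e < preopen \<tau> W"
    using less_pnbhdD[OF lB(1)] a' tln e by auto
  obtain U' where U': "x \<in> U'" "U' \<subseteq> U" "n - e < preopen \<tau> U'"
    using less_pnbhdD[of "n - e" x U] a' tln e unfolding n_def by auto
  define c where "c = min (l - e) (n - e)"
  have "c \<le> min (preopen \<tau> W) (preopen \<tau> U')"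
    unfolding c_def using W(3) U'(3) by (intro min.mono) simp_all
  also have "\<dots> \<le> preopen \<tau> (W \<inter> U')" by (rule preopen_Int)
  finally have cWU: "c \<le> preopen \<tau> (W \<inter> U')" .
  have "pnbhd \<tau> x B \<le> 1" by simp
  then have "2 < (t - e) + GammaP \<tau> B + (l - e)" "2 < (t - e) + GammaP \<tau> B + (n - e)"
    using lB(2) a' tln by linarith+
  then have "2 < (t - e) + GammaP \<tau> B + c" unfolding c_def by (simp add: min_def)
  then obtain V where V: "min (t - e) c \<le> pnbhd \<tau> x V" "t - e \<le> infI ((\<lambda>y. pnbhd \<tau> y (- V)) ` (- U))"
    "GammaP \<tau> B + (t - e) - 1 \<le> GammaP \<tau> V"
    using compact_pclosed_pnbhd[of x "W \<inter> U'" B U c "t - e"] W U' cWU a' tln e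
    unfolding c_def t_def by auto
  have "t + 2 * l + n - 3 - 2 * e \<le> min (t - e) c" using a' tln e unfolding c_def by simp
  then have "t + 2 * l + n - 3 - 2 * e \<le> pnbhd \<tau> x V"
    "t + 2 * l + n - 3 - 2 * e \<le> infI ((\<lambda>y. pnbhd \<tau> y (- V)) ` (- U))"
    "t + 2 * l + n - 3 - 2 * e \<le> GammaP \<tau> V"
    using V lB \<open>pnbhd \<tau> x B \<le> 1\<close> tln by linarith+
  then show ?thesis unfolding t_def l_def n_def by auto
qed

lemma T2P_LPC_le_compact_pclosed_nbhd_deg:
  "T2P \<tau> + 2 * LPC \<tau> + pnbhd \<tau> x U - 3 \<le> compact_pclosed_nbhd_deg \<tau> x U"
  (is "?a \<le> _")
proof (cases "?a \<le> 0")
  case True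
  then show ?thesis using compact_pclosed_nbhd_deg_unit[of x U] by linarith
next
  case False
  show ?thesis
  proof (rule field_le_epsilon)
    fix e :: real assume "0 < e"
    define d where "d = min (e / 2) (?a / 4)"
    have "0 < ?a" using False by linarith
    then have "0 < d" using \<open>0 < e\<close> unfolding d_def by simp
    moreover have "d \<le> ?a / 4" unfolding d_def by (rule min.cobounded2)
    moreover have "d \<le> e / 2" unfolding d_def by (rule min.cobounded1)
    ultimately have d: "0 < d" "3 * d < ?a" "2 * d \<le> e" using \<open>0 < ?a\<close> by simp_all
    obtain V where "?a - 2 * d \<le>
        min (pnbhd \<tau> x V) (min (infI ((\<lambda>y. pnbhd \<tau> y (- V)) ` (- U))) (GammaP \<tau> V))"
      using compact_pclosed_pnbhd_approx[OF d(1,2)] by blast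
    also have "\<dots> \<le> compact_pclosed_nbhd_deg \<tau> x U" by (rule le_compact_pclosed_nbhd_deg)
    finally show "?a \<le> compact_pclosed_nbhd_deg \<tau> x U + e" using d(3) by linarith
  qed
qed

end

theorem theorem4p3:
  fixes \<tau> :: "'a set \<Rightarrow> real"
  assumes "fuzzifying_topology \<tau>"
    and "\<forall>A B. preopen \<tau> (A \<inter> B) \<ge> min (preopen \<tau> A) (preopen \<tau> B)"
  shows "\<forall>x U. max 0 (T2P \<tau> + 2 * LPC \<tau> - 2) \<le>
           min 1 (1 - pnbhd \<tau> x U +
             supI {min (pnbhd \<tau> x V) (min (infI ((\<lambda>y. pnbhd \<tau> y (- V)) ` (- U))) (GammaP \<tau> V))
                   | V. True})"
proof (intro allI, fold compact_pclosed_nbhd_deg_def)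
  fix x U
  interpret preopen_Int_stable \<tau>
    using assms by unfold_locales auto
  show "max 0 (T2P \<tau> + 2 * LPC \<tau> - 2) \<le> min 1 (1 - pnbhd \<tau> x U + compact_pclosed_nbhd_deg \<tau> x U)"
    using T2P_LPC_le_compact_pclosed_nbhd_deg[of x U] compact_pclosed_nbhd_deg_unit[of x U]
      T2P_unit LPC_unit pnbhd_unit[of x U] by linarith
qed

end
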